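(* Let $u\in\mathbb{R}$, $q=Q_v(u)$, $r=\mathcal{S}(U(u))$, $e=u-\sup\{T_n^0:T_n^0\le u\}$, $z^+=(q,r,e)$ and $z^-=(0,0,e)$. Then for all $t\ge u$, \[ Q_u(t-u;z^-)\le Q_u(t-u;z^+)\le Q_v(t).\]
   Context: Let $c\ge1$. Let $G,F$ be CDFs of strictly positive random variables $A$ (interarrival) and $V$ (service), $\lambda=1/E[A]$, $\mu=1/E[V]$, $\lambda<c\mu$. Let $\mathcal{T}^0=\{T_n^0:n\in\mathbb{Z}\setminus\{0\}\}$ be a time-stationary renewal point process with inter-renewal CDF $G$, indexed $\dots<T_{-1}^0<0<T_1^0<\dots$. Let $\mathcal{T}^i=\{T_n^i\}$, $i=1,\dots,c$, be i.i.d. time-stationary renewal processes with inter-renewal CDF $F$, independent of $\mathcal{T}^0$; $V_k^i=T_k^{i,+}-T_k^i$ where $T_k^{i,+}$ is the next point after $T_k^i$. $U^i(t)=\inf\{T_n^i:T_n^i>t\}-t$, $U(t)=(U^1(t),\dots,U^c(t))$; $\mathcal{S}$ sorts ascending. Vacation system: customers arrive at the points of $\mathcal{T}^0$ and wait in a FCFS queue; at each point $T_k^i$, if the queue is nonempty just before, the head customer leaves the queue and is served by server $i$ for time $V_k^i$, otherwise server $i$ takes a vacation of length $V_k^i$. Its stationary number waiting in queue is $Q_v(t)=\sup_{s\le t}\big(|(s,t]\cap\mathcal{T}^0|-\sum_{i=1}^c|(s,t]\cap\mathcal{T}^i|\big)$. The customer arriving at $T_n^0$ leaves this queue at some point $T_k^{i(n)}$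 and is assigned service time $V_n:=V_k^{i(n)}$. For $u\in\mathbb{R}$ and $z=(q,r,e)$ ($q\in\mathbb{Z}_{\ge0}$, $r\in\mathbb{R}_{\ge0}^c$ ascending, $e\ge0$), $Q_u(t;z)$, $t\ge0$, is the number of customers waiting in queue at time $u+t$ in a FCFS $c$-server queue which at time $u$ has $q$ customers waiting, sorted remaining service times $r$ at the servers and time $e$ since the last arrival, and which is fed by the customers arriving at $T_n^0\in(u,u+t]$ with service times $V_n$. *)

theory Defs
  imports Complex_Main
begin

text \<open>Arrival epochs: a set T0 of reals (points of the arrival process).
  Service epochs of server i (i in 1..c): a set S i of reals.\<close>

definition loc_finite :: "real set \<Rightarrow> bool" where
  "loc_finite X \<longleftrightarrow> (\<forall>a b. finite (X \<inter> {a..b}))"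

definition unbounded_both :: "real set \<Rightarrow> bool" where
  "unbounded_both X \<longleftrightarrow> (\<forall>x. (\<exists>y\<in>X. x < y) \<and> (\<exists>y\<in>X. y < x))"

definition cnt :: "real set \<Rightarrow> real \<Rightarrow> real \<Rightarrow> int" where
  "cnt X s t = int (card (X \<inter> {s<..t}))"

definition cnt_open :: "real set \<Rightarrow> real \<Rightarrow> real \<Rightarrow> int" where
  "cnt_open X s t = int (card (X \<inter> {s<..<t}))"

definition Sall :: "nat \<Rightarrow> (nat \<Rightarrow> real set) \<Rightarrow> real set" where
  "Sall c S = (\<Union>i\<in>{1..c}. S i)"

definition Qv_set :: "nat \<Rightarrow> real set \<Rightarrow> (nat \<Rightarrow> real set) \<Rightarrow> real \<Rightarrow> int set" where
  "Qv_set c T0 S t = {cnt T0 s t - (\<Sum>i\<in>{1..c}. cnt (S i) s t) | s. s \<le> t}"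

definition Qv :: "nat \<Rightarrow> real set \<Rightarrow> (nat \<Rightarrow> real set) \<Rightarrow> real \<Rightarrow> int" where
  "Qv c T0 S t = Sup (Qv_set c T0 S t)"

text \<open>Left limit Q_v(t-): the number waiting just before time t.\<close>
definition Qv_left :: "nat \<Rightarrow> real set \<Rightarrow> (nat \<Rightarrow> real set) \<Rightarrow> real \<Rightarrow> int" where
  "Qv_left c T0 S t =
     Sup {cnt_open T0 s t - (\<Sum>i\<in>{1..c}. cnt_open (S i) s t) | s. s \<le> t}"

definition nextpt :: "real set \<Rightarrow> real \<Rightarrow> real" where
  "nextpt X x = Inf {y\<in>X. x < y}"

definition resid :: "real set \<Rightarrow> real \<Rightarrow> real" where
  "resid X t = nextpt X t - t"

text \<open>Service epochs at which a customer leaves the vacation queue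
  (the queue was nonempty just before).\<close>
definition busy_epoch :: "nat \<Rightarrow> real set \<Rightarrow> (nat \<Rightarrow> real set) \<Rightarrow> real \<Rightarrow> bool" where
  "busy_epoch c T0 S x \<longleftrightarrow> x \<in> Sall c S \<and> Qv_left c T0 S x \<ge> 1"

text \<open>FCFS: the customer arriving at a finds Q_v(a-) customers ahead of it and
  leaves the queue at the (Q_v(a-)+1)-th busy service epoch after a.\<close>
definition dep_epoch :: "nat \<Rightarrow> real set \<Rightarrow> (nat \<Rightarrow> real set) \<Rightarrow> real \<Rightarrow> real" where
  "dep_epoch c T0 S a =
     (THE x. a < x \<and> busy_epoch c T0 S x \<and>
        card {y. a < y \<and> y \<le> x \<and> busy_epoch c T0 S y} = nat (Qv_left c T0 S a) + 1)"

text \<open>Service time V_n of the customer arriving at a: if it leaves the queue at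
  the point x = T_k^i of server i, then V_n = V_k^i = (next point of T^i after x) - x.\<close>
definition svc_time :: "nat \<Rightarrow> real set \<Rightarrow> (nat \<Rightarrow> real set) \<Rightarrow> real \<Rightarrow> real" where
  "svc_time c T0 S a =
     (let x = dep_epoch c T0 S a; i = (THE i. i \<in> {1..c} \<and> x \<in> S i)
      in nextpt (S i) x - x)"

text \<open>Start-of-service times of customers (arrival, service time) served in
  FCFS order by c servers whose (sorted) free-times are W.\<close>
fun fcfs_starts :: "real list \<Rightarrow> (real \<times> real) list \<Rightarrow> real list" where
  "fcfs_starts W [] = []"
| "fcfs_starts W ((a, v) # cs) =
     (let s = max a (hd W) in s # fcfs_starts (insort (s + v) (tl W)) cs)"

text \<open>Q_u(t; z) with z = (q, r, e): number waiting at time u+t in the FCFS c-server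
  queue which at time u has q customers waiting (the q latest arrivals at or
  before u, with their service times V_n), servers with sorted remaining service
  times r (server j becomes free at u + r_j), time e since last arrival, fed by the
  customers arriving at points of T0 in (u, u+t] with service times V_n.\<close>
definition Qu :: "nat \<Rightarrow> real set \<Rightarrow> (nat \<Rightarrow> real set) \<Rightarrow> real \<Rightarrow> real
                  \<Rightarrow> nat \<times> real list \<times> real \<Rightarrow> nat" where
  "Qu c T0 S u t z =
     (case z of (q, r, e) \<Rightarrow>
       let waiting = sorted_list_of_set {a \<in> T0. a \<le> u \<and> card (T0 \<inter> {a..u}) \<le> q};
           arriving = sorted_list_of_set (T0 \<inter> {u<..u+t});
           cs = map (\<lambda>a. (u, svc_time c T0 S a)) waiting
                @ map (\<lambda>a. (a, svc_time c T0 S a)) arriving;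
           starts = fcfs_starts (map (\<lambda>x. u + x) r) cs
       in length (filter (\<lambda>s. u + t < s) starts))"

end

theory Submission
  imports Defs
begin

text \<open>Both bounds compare start-of-service epochs customer by customer. FCFS start epochs are
  monotone in the sorted vector of server free times, so emptying the queue and idling the servers
  at u can only make services start earlier. In the vacation system the customer arriving at a
  leaves the queue at the (Q_v(a-)+1)-th busy service epoch after a; these epochs increase with a,
  and serving the same customers FCFS from z+ starts each of them no later, because after every
  service the vector of server free times stays dominated by the vector of next service epochs of
  the c servers. Finally, by the Lindley representation of Q_v, at most Q_v(t) of the customers
  that arrived by t are still waiting in the vacation system at t.\<close>

section \<open>Locally finite point sets\<close>

lemma finite_Int_greaterThanAtMost: "loc_finite Y \<Longrightarrow> finite (Y \<inter> {s<..t})"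
  unfolding loc_finite_def by (rule finite_subset[of _ "Y \<inter> {s..t}"]) auto

lemma finite_Int_greaterThanLessThan: "loc_finite Y \<Longrightarrow> finite (Y \<inter> {s<..<t})"
  unfolding loc_finite_def by (rule finite_subset[of _ "Y \<inter> {s..t}"]) auto

lemma finite_Int_atLeastAtMost: "loc_finite Y \<Longrightarrow> finite (Y \<inter> {s..t})"
  unfolding loc_finite_def by auto

lemma cnt_split:
  assumes "loc_finite Y" "s \<le> a" "a \<le> t"
  shows "cnt Y s t = cnt Y s a + cnt Y a t"
proof -
  have "Y \<inter> {s<..t} = (Y \<inter> {s<..a}) \<union> (Y \<inter> {a<..t})" using assms by auto
  then show ?thesis
    unfolding cnt_def using finite_Int_greaterThanAtMost[OF assms(1)]
    by (simp add: card_Un_disjoint disjoint_iff)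
qed

lemma cnt_open_split:
  assumes "loc_finite Y" "s \<le> a" "a < t"
  shows "cnt_open Y s t = cnt Y s a + cnt_open Y a t"
proof -
  have "Y \<inter> {s<..<t} = (Y \<inter> {s<..a}) \<union> (Y \<inter> {a<..<t})" using assms by auto
  then show ?thesis
    unfolding cnt_def cnt_open_def
    using finite_Int_greaterThanAtMost[OF assms(1)] finite_Int_greaterThanLessThan[OF assms(1)]
    by (simp add: card_Un_disjoint disjoint_iff)
qed

lemma cnt_eq_cnt_open:
  assumes "loc_finite Y" "s < t"
  shows "cnt Y s t = cnt_open Y s t + (if t \<in> Y then 1 else 0)"
proof -
  have "Y \<inter> {s<..t} = (if t \<in> Y then insert t (Y \<inter> {s<..<t}) else Y \<inter> {s<..<t})"
    using assms(2) by (auto simp: less_le)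
  then show ?thesis
    unfolding cnt_def cnt_open_def using finite_Int_greaterThanLessThan[OF assms(1)] by simp
qed

lemma cnt_self [simp]: "cnt Y t t = 0"
  unfolding cnt_def by simp

lemma cnt_open_self [simp]: "cnt_open Y t t = 0"
  unfolding cnt_open_def by simp

lemma cnt_nonneg: "0 \<le> cnt Y s t"
  unfolding cnt_def by simp

lemma cnt_open_nonneg: "0 \<le> cnt_open Y s t"
  unfolding cnt_open_def by simp

lemma cnt_antimono_left: "loc_finite Y \<Longrightarrow> s' \<le> s \<Longrightarrow> cnt Y s t \<le> cnt Y s' t"
  unfolding cnt_def using finite_Int_greaterThanAtMost by (auto intro!: card_mono)

lemma loc_finite_gap_before:
  assumes "loc_finite Y"
  obtains s where "s < a" "Y \<inter> {s<..<a} = {}"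
proof -
  define F where "F = Y \<inter> {a - 1..<a}"
  have fin: "finite F"
    unfolding F_def by (rule finite_subset[OF _ finite_Int_atLeastAtMost[OF assms, of "a - 1" a]]) auto
  define s where "s = Max (insert (a - 1) F)"
  have "s < a"
    unfolding s_def using fin by (simp add: F_def)
  moreover have "Y \<inter> {s<..<a} = {}"
  proof (rule ccontr)
    assume "Y \<inter> {s<..<a} \<noteq> {}"
    then obtain y where y: "y \<in> Y" "s < y" "y < a" by auto
    have "a - 1 \<le> s" unfolding s_def using fin by simp
    with y have "y \<in> F" unfolding F_def by auto
    then have "y \<le> s" unfolding s_def using fin by simp
    with y show False by simp
  qed
  ultimately show thesis using that by blast
qed

lemma loc_finite_many_after:
  assumes "loc_finite Y" "unbounded_both Y"
  shows "\<exists>x\<ge>a. k \<le> card (Y \<inter> {a<..x})"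
proof (induction k)
  case (Suc k)
  then obtain x where x: "a \<le> x" "k \<le> card (Y \<inter> {a<..x})" by blast
  obtain y where y: "y \<in> Y" "x < y" using assms(2) unfolding unbounded_both_def by blast
  with x have "y \<in> Y \<inter> {a<..y} - Y \<inter> {a<..x}" "Y \<inter> {a<..x} \<subseteq> Y \<inter> {a<..y}" by auto
  then have "Y \<inter> {a<..x} \<subset> Y \<inter> {a<..y}" by blast
  then have "card (Y \<inter> {a<..x}) < card (Y \<inter> {a<..y})"
    by (rule psubset_card_mono[OF finite_Int_greaterThanAtMost[OF assms(1)]])
  with x y show ?case by (intro exI[of _ y]) auto
qed auto

lemma loc_finite_many_before:
  assumes "loc_finite Y" "unbounded_both Y"
  shows "\<exists>b\<le>u. k \<le> card (Y \<inter> {b..u})"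
proof (induction k)
  case (Suc k)
  then obtain b where b: "b \<le> u" "k \<le> card (Y \<inter> {b..u})" by blast
  obtain y where y: "y \<in> Y" "y < b" using assms(2) unfolding unbounded_both_def by blast
  with b have "y \<in> Y \<inter> {y..u} - Y \<inter> {b..u}" "Y \<inter> {b..u} \<subseteq> Y \<inter> {y..u}" by auto
  then have "Y \<inter> {b..u} \<subset> Y \<inter> {y..u}" by blast
  then have "card (Y \<inter> {b..u}) < card (Y \<inter> {y..u})"
    by (rule psubset_card_mono[OF finite_Int_atLeastAtMost[OF assms(1)]])
  with b y show ?case by (intro exI[of _ y]) auto
qed auto

lemma nextpt_least:
  assumes "loc_finite Y" "unbounded_both Y"
  shows "nextpt Y x \<in> Y \<and> x < nextpt Y x \<and> (\<forall>y\<in>Y. x < y \<longrightarrow> nextpt Y x \<le> y)"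
proof -
  obtain y0 where y0: "y0 \<in> Y" "x < y0" using assms(2) unfolding unbounded_both_def by blast
  define F where "F = Y \<inter> {x<..y0}"
  have fin: "finite F" unfolding F_def using finite_Int_greaterThanAtMost[OF assms(1)] .
  have "y0 \<in> F" using y0 unfolding F_def by auto
  then have mF: "Min F \<in> F" using fin by (intro Min_in) auto
  have mle: "\<forall>y\<in>Y. x < y \<longrightarrow> Min F \<le> y"
  proof (intro ballI impI)
    fix y assume "y \<in> Y" "x < y"
    show "Min F \<le> y"
    proof (cases "y \<le> y0")
      case True
      with \<open>y \<in> Y\<close> \<open>x < y\<close> have "y \<in> F" unfolding F_def by auto
      then show ?thesis using fin by simp
    next
      case False
      then show ?thesis using mF unfolding F_def by auto
    qed
  qed
  have "nextpt Y x = Min F"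
    unfolding nextpt_def by (rule cInf_eq_minimum) (use mF mle F_def in auto)
  then show ?thesis using mF mle F_def by auto
qed

lemma less_nextpt: "loc_finite Y \<Longrightarrow> unbounded_both Y \<Longrightarrow> x < nextpt Y x"
  using nextpt_least by blast

lemma nextpt_le: "loc_finite Y \<Longrightarrow> unbounded_both Y \<Longrightarrow> y \<in> Y \<Longrightarrow> x < y \<Longrightarrow> nextpt Y x \<le> y"
  using nextpt_least by blast

lemma nextpt_mono:
  assumes "loc_finite Y" "unbounded_both Y" "x \<le> y"
  shows "nextpt Y x \<le> nextpt Y y"
  using nextpt_least[OF assms(1,2), of x] nextpt_least[OF assms(1,2), of y] assms(3) by force

lemma resid_pos: "loc_finite Y \<Longrightarrow> unbounded_both Y \<Longrightarrow> 0 < resid Y t"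
  unfolding resid_def using less_nextpt by simp

definition last_points :: "real set \<Rightarrow> real \<Rightarrow> nat \<Rightarrow> real set" where
  "last_points X u q = {a \<in> X. a \<le> u \<and> card (X \<inter> {a..u}) \<le> q}"

lemma finite_last_points:
  assumes "loc_finite X" "unbounded_both X"
  shows "finite (last_points X u q)"
proof -
  obtain b where b: "b \<le> u" "q + 1 \<le> card (X \<inter> {b..u})"
    using loc_finite_many_before[OF assms] by blast
  have "last_points X u q \<subseteq> X \<inter> {b..u}"
  proof
    fix a assume a: "a \<in> last_points X u q"
    have "b \<le> a"
    proof (rule ccontr)
      assume "\<not> b \<le> a"
      then have "card (X \<inter> {b..u}) \<le> card (X \<inter> {a..u})"
        by (intro card_mono finite_Int_atLeastAtMost[OF assms(1)]) auto
      with a b show False unfolding last_points_def by simp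
    qed
    with a show "a \<in> X \<inter> {b..u}" unfolding last_points_def by auto
  qed
  then show ?thesis using finite_Int_atLeastAtMost[OF assms(1)] finite_subset by blast
qed

lemma last_points_0: "loc_finite X \<Longrightarrow> last_points X u 0 = {}"
  unfolding last_points_def using finite_Int_atLeastAtMost[of X] by (auto simp: card_eq_0_iff)

section \<open>FCFS multi-server queues\<close>

definition count_above :: "real \<Rightarrow> real list \<Rightarrow> nat" where
  "count_above x W = length (filter (\<lambda>w. x < w) W)"

lemma count_above_Cons: "count_above x (w # W) = count_above x W + (if x < w then 1 else 0)"
  unfolding count_above_def by simp

lemma count_above_append: "count_above x (W @ W') = count_above x W + count_above x W'"
  unfolding count_above_def by simp

lemma count_above_insort: "count_above x (insort y W) = count_above x W + (if x < y then 1 else 0)"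
  unfolding count_above_def by (induction W) auto

lemma count_above_map_sort: "count_above x (map f (sort W)) = count_above x (map f W)"
  unfolding count_above_def filter_map comp_def filter_sort length_map length_sort ..

lemma count_above_le_length: "count_above x W \<le> length W"
  unfolding count_above_def by simp

lemma count_above_eq_length: "\<forall>w\<in>set W. x < w \<Longrightarrow> count_above x W = length W"
  unfolding count_above_def by (simp add: filter_True)

lemma count_above_mono: "list_all2 (\<le>) W W' \<Longrightarrow> count_above x W \<le> count_above x W'"
  unfolding count_above_def by (induction rule: list_all2_induct) auto

lemma count_above_map_upt: "count_above x (map f [1..<c+1]) = card {i\<in>{1..c}. x < f i}"
proof -
  have "count_above x (map f [1..<c+1]) = card ({i. x < f i} \<inter> set [1..<c+1])"
    unfolding count_above_def by (simp add: filter_map distinct_length_filter o_def)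
  also have "{i. x < f i} \<inter> set [1..<c+1] = {i\<in>{1..c}. x < f i}" by auto
  finally show ?thesis .
qed

text \<open>For sorted lists of equal length, domination is the componentwise order.\<close>

definition dominated :: "real list \<Rightarrow> real list \<Rightarrow> bool" where
  "dominated W W' \<longleftrightarrow> (\<forall>x. count_above x W \<le> count_above x W')"

lemma hd_le_if_dominated:
  assumes "dominated W W'" "sorted W" "length W = length W'" "W' \<noteq> []"
  shows "hd W \<le> hd W'"
proof (rule ccontr)
  assume "\<not> hd W \<le> hd W'"
  with assms(2,3,4) have "\<forall>w\<in>set W. hd W' < w" by (cases W) auto
  then have "count_above (hd W') W = length W'" using assms(3) by (simp add: count_above_eq_length)
  moreover have "count_above (hd W') W' < length W'"
    using assms(4) by (cases W') (auto simp: count_above_Cons le_imp_less_Suc count_above_le_length)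
  ultimately show False using assms(1) unfolding dominated_def by (metis not_le)
qed

lemma dominated_insort_tl:
  assumes "dominated W W'" "sorted W'" "length W = length W'" "W \<noteq> []"
    and "hd W \<le> hd W'" "y \<le> y'" "hd W' \<le> y'"
  shows "dominated (insort y (tl W)) (insort y' (tl W'))"
  unfolding dominated_def
proof
  fix x
  obtain h t h' t' where W: "W = h # t" and W': "W' = h' # t'"
    using assms(3,4) by (cases W; cases W') auto
  show "count_above x (insort y (tl W)) \<le> count_above x (insort y' (tl W'))"
  proof (cases "x < h'")
    case True
    with assms(2,7) W' have "\<forall>w\<in>set (insort y' (tl W')). x < w" by (auto simp: set_insort_key)
    moreover have "length (insort y (tl W)) = length (insort y' (tl W'))"
      using assms(3) by (simp add: length_insort)
    ultimately show ?thesis by (metis count_above_eq_length count_above_le_length)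
  next
    case False
    with assms(5) W W' have "count_above x W = count_above x t" "count_above x W' = count_above x t'"
      by (auto simp: count_above_Cons)
    moreover have "count_above x W \<le> count_above x W'"
      using assms(1) unfolding dominated_def by blast
    ultimately show ?thesis using assms(6) W W' by (auto simp: count_above_insort)
  qed
qed

lemma fcfs_starts_mono:
  assumes "sorted W" "sorted W'" "length W = length W'" "W \<noteq> []" "dominated W W'"
    and "\<forall>p\<in>set cs. 0 \<le> snd p"
  shows "list_all2 (\<le>) (fcfs_starts W cs) (fcfs_starts W' cs)"
  using assms
proof (induction cs arbitrary: W W')
  case (Cons p cs)
  obtain a v where p: "p = (a, v)" by (cases p)
  have "W' \<noteq> []" using Cons.prems(3,4) by auto
  then have hh: "hd W \<le> hd W'" using Cons.prems hd_le_if_dominated by blast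
  have v: "0 \<le> v" using Cons.prems(6) p by simp
  let ?y = "max a (hd W) + v" and ?y' = "max a (hd W') + v"
  have "list_all2 (\<le>) (fcfs_starts (insort ?y (tl W)) cs) (fcfs_starts (insort ?y' (tl W')) cs)"
  proof (rule Cons.IH)
    show "dominated (insort ?y (tl W)) (insort ?y' (tl W'))"
      using Cons.prems hh v by (intro dominated_insort_tl) auto
  qed (use Cons.prems in \<open>auto simp: sorted_insort length_insort sorted_tl\<close>)
  then show ?case using hh p by (simp add: Let_def)
qed simp

fun fcfs_free_times :: "real list \<Rightarrow> (real \<times> real) list \<Rightarrow> real list" where
  "fcfs_free_times W [] = W"
| "fcfs_free_times W ((a, v) # cs) = fcfs_free_times (insort (max a (hd W) + v) (tl W)) cs"

lemma fcfs_starts_append: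
  "fcfs_starts W (cs @ ds) = fcfs_starts W cs @ fcfs_starts (fcfs_free_times W cs) ds"
  by (induction W cs rule: fcfs_free_times.induct) (auto simp: Let_def)

lemma length_fcfs_free_times: "W \<noteq> [] \<Longrightarrow> length (fcfs_free_times W cs) = length W"
  by (induction W cs rule: fcfs_free_times.induct) (auto simp: length_insort)

lemma sorted_fcfs_free_times: "sorted W \<Longrightarrow> sorted (fcfs_free_times W cs)"
  by (induction W cs rule: fcfs_free_times.induct) (auto simp: sorted_insort sorted_tl)

lemma fcfs_free_times_ge:
  "\<forall>w\<in>set W. u \<le> w \<Longrightarrow> \<forall>p\<in>set cs. u \<le> fst p \<and> 0 \<le> snd p \<Longrightarrow>
   \<forall>w\<in>set (fcfs_free_times W cs). u \<le> w"
proof (induction W cs rule: fcfs_free_times.induct)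
  case (2 W a v cs)
  have "set (tl W) \<subseteq> set W" by (cases W) auto
  with "2.prems" have "\<forall>w\<in>set (insort (max a (hd W) + v) (tl W)). u \<le> w"
    by (auto simp: set_insort_key)
  with "2.IH" "2.prems" show ?case by simp
qed simp

lemma fcfs_starts_idle_le:
  assumes "sorted W" "length W = c" "c \<ge> 1" "\<forall>w\<in>set W. u \<le> w" "\<forall>p\<in>set cs. 0 \<le> snd p"
  shows "list_all2 (\<le>) (fcfs_starts (replicate c u) cs) (fcfs_starts W cs)"
proof (rule fcfs_starts_mono)
  show "dominated (replicate c u) W"
    unfolding dominated_def
  proof
    fix x
    show "count_above x (replicate c u) \<le> count_above x W"
    proof (cases "x < u")
      case True
      with assms(4) have "count_above x W = c" using assms(2) by (force intro: count_above_eq_length)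
      then show ?thesis using count_above_le_length[of x "replicate c u"] by simp
    qed (simp add: count_above_def)
  qed
qed (use assms in auto)

lemma hd_le_service_epoch:
  fixes Sv :: "nat \<Rightarrow> real set"
  assumes Sv: "\<forall>i\<in>{1..c}. loc_finite (Sv i) \<and> unbounded_both (Sv i)"
    and W: "sorted W" "length W = c" "dominated W (map (\<lambda>i. nextpt (Sv i) D) [1..<c+1])"
    and d: "D < d" "i0 \<in> {1..c}" "d \<in> Sv i0"
  shows "hd W \<le> d"
proof (rule ccontr)
  assume "\<not> hd W \<le> d"
  with W(1) have "\<forall>w\<in>set W. d < w" by (cases W) auto
  then have "count_above d W = c" using W(2) count_above_eq_length by simp
  moreover have "nextpt (Sv i0) D \<le> d" using Sv d nextpt_le by blast
  with d(2) have "i0 \<in> {1..c} - {i\<in>{1..c}. d < nextpt (Sv i) D}" by simp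
  then have "{i\<in>{1..c}. d < nextpt (Sv i) D} \<subset> {1..c}" by blast
  then have "card {i\<in>{1..c}. d < nextpt (Sv i) D} < c"
    by (metis card_atLeastAtMost diff_Suc_1 finite_atLeastAtMost psubset_card_mono)
  ultimately show False using W(3) unfolding dominated_def count_above_map_upt by (metis not_le)
qed

lemma card_Collect_le_remove:
  assumes "finite I" "i0 \<in> I" "{i\<in>I. P i} \<subseteq> {i\<in>I. Q i} - {i0}"
  shows "card {i\<in>I. P i} + (if Q i0 then 1 else 0) \<le> card {i\<in>I. Q i}"
proof (cases "Q i0")
  case True
  with assms(1,2) have "card ({i\<in>I. Q i} - {i0}) + 1 = card {i\<in>I. Q i}"
    using card_Suc_Diff1[of "{i\<in>I. Q i}" i0] by simp
  moreover have "card {i\<in>I. P i} \<le> card ({i\<in>I. Q i} - {i0})"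
    using assms(1,3) by (intro card_mono) auto
  ultimately show ?thesis using True by simp
next
  case False
  have "card {i\<in>I. P i} \<le> card {i\<in>I. Q i}"
    using assms(1,3) by (intro card_mono) auto
  with False show ?thesis by simp
qed

lemma dominated_after_service_epoch:
  fixes Sv :: "nat \<Rightarrow> real set"
  assumes Sv: "\<forall>i\<in>{1..c}. loc_finite (Sv i) \<and> unbounded_both (Sv i)"
    and W: "length W = c" "dominated W (map (\<lambda>i. nextpt (Sv i) D) [1..<c+1])"
    and d: "D < d" "i0 \<in> {1..c}" "d \<in> Sv i0" "s \<le> d"
  shows "dominated (insort (s + (nextpt (Sv i0) d - d)) (tl W)) (map (\<lambda>i. nextpt (Sv i) d) [1..<c+1])"
  unfolding dominated_def
proof
  fix x
  let ?N = "\<lambda>y i. nextpt (Sv i) y"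
  have W_ne: "W \<noteq> []" using W(1) d(2) by auto
  show "count_above x (insort (s + (?N d i0 - d)) (tl W)) \<le> count_above x (map (?N d) [1..<c+1])"
  proof (cases "x < d")
    case True
    have "\<forall>i\<in>{1..c}. x < ?N d i" using Sv True less_nextpt less_trans by blast
    then have "{i\<in>{1..c}. x < ?N d i} = {1..c}" by auto
    then have "count_above x (map (?N d) [1..<c+1]) = c"
      unfolding count_above_map_upt by simp
    moreover have "length (insort (s + (?N d i0 - d)) (tl W)) = c"
      using W(1) W_ne by (cases W) (auto simp: length_insort)
    ultimately show ?thesis by (metis count_above_le_length)
  next
    case False
    have sub: "{i\<in>{1..c}. x < ?N D i} \<subseteq> {i\<in>{1..c}. x < ?N d i} - {i0}"
    proof -
      have "?N D i0 \<le> x" using Sv d False nextpt_le by force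
      moreover have "?N D i \<le> ?N d i" if "i \<in> {1..c}" for i
        using Sv that d(1) nextpt_mono by simp
      ultimately show ?thesis by (auto intro: less_le_trans)
    qed
    have "count_above x (insort (s + (?N d i0 - d)) (tl W))
        = count_above x (tl W) + (if x < s + (?N d i0 - d) then 1 else 0)"
      by (rule count_above_insort)
    also have "\<dots> \<le> count_above x W + (if x < ?N d i0 then 1 else 0)"
      using W_ne d(4) by (cases W) (auto simp: count_above_Cons)
    also have "\<dots> \<le> card {i\<in>{1..c}. x < ?N D i} + (if x < ?N d i0 then 1 else 0)"
      using W(2) unfolding dominated_def count_above_map_upt by simp
    also have "\<dots> \<le> card {i\<in>{1..c}. x < ?N d i}"
      using sub d(2) by (intro card_Collect_le_remove) auto
    finally show ?thesis unfolding count_above_map_upt .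
  qed
qed

lemma fcfs_starts_le_service_epochs:
  fixes Sv :: "nat \<Rightarrow> real set" and arr epoch :: "'a \<Rightarrow> real" and srv :: "'a \<Rightarrow> nat"
  assumes Sv: "\<forall>i\<in>{1..c}. loc_finite (Sv i) \<and> unbounded_both (Sv i)"
    and "sorted W" "length W = c" "dominated W (map (\<lambda>i. nextpt (Sv i) D) [1..<c+1])"
    and "sorted_wrt (<) (D # map epoch as)"
    and "\<forall>a\<in>set as. arr a \<le> epoch a \<and> srv a \<in> {1..c} \<and> epoch a \<in> Sv (srv a)"
  shows "list_all2 (\<le>)
           (fcfs_starts W (map (\<lambda>a. (arr a, nextpt (Sv (srv a)) (epoch a) - epoch a)) as))
           (map epoch as)"
  using assms(2-)
proof (induction as arbitrary: W D)
  case (Cons a as)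
  define d where "d = epoch a"
  define i0 where "i0 = srv a"
  have a: "arr a \<le> d" "i0 \<in> {1..c}" "d \<in> Sv i0" "D < d"
    using Cons.prems(4,5) unfolding d_def i0_def by auto
  have "hd W \<le> d" using hd_le_service_epoch[OF Sv Cons.prems(1-3) a(4,2,3)] .
  then have s: "max (arr a) (hd W) \<le> d" using a(1) by simp
  have "W \<noteq> []" using Cons.prems(2) a(2) by auto
  have "list_all2 (\<le>)
          (fcfs_starts (insort (max (arr a) (hd W) + (nextpt (Sv i0) d - d)) (tl W))
             (map (\<lambda>a. (arr a, nextpt (Sv (srv a)) (epoch a) - epoch a)) as))
          (map epoch as)"
  proof (rule Cons.IH)
    show "dominated (insort (max (arr a) (hd W) + (nextpt (Sv i0) d - d)) (tl W))
            (map (\<lambda>i. nextpt (Sv i) d) [1..<c+1])"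
      using dominated_after_service_epoch[OF Sv Cons.prems(2,3) a(4,2,3) s] .
  qed (use Cons.prems \<open>W \<noteq> []\<close> in \<open>auto simp: d_def sorted_insort length_insort sorted_tl\<close>)
  then show ?case using s by (simp add: Let_def d_def i0_def)
qed simp

locale vacation_system =
  fixes c :: nat and T0 :: "real set" and S :: "nat \<Rightarrow> real set"
  assumes servers_nonempty: "c \<ge> 1"
    and loc_finite_arrivals: "loc_finite T0"
    and unbounded_arrivals: "unbounded_both T0"
    and services: "\<forall>i\<in>{1..c}. loc_finite (S i) \<and> unbounded_both (S i)"
    and arrivals_services_disjoint: "\<forall>i\<in>{1..c}. T0 \<inter> S i = {}"
    and services_disjoint: "\<forall>i\<in>{1..c}. \<forall>j\<in>{1..c}. i \<noteq> j \<longrightarrow> S i \<inter> S j = {}"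
    and bdd_Qv_set: "\<forall>t. bdd_above (Qv_set c T0 S t)"
begin

abbreviation "SA \<equiv> Sall c S"
abbreviation "Q \<equiv> Qv c T0 S"
abbreviation "Ql \<equiv> Qv_left c T0 S"
abbreviation "busy \<equiv> busy_epoch c T0 S"
abbreviation "dep \<equiv> dep_epoch c T0 S"

definition net_input :: "real \<Rightarrow> real \<Rightarrow> int" where
  "net_input s t = cnt T0 s t - cnt SA s t"

definition net_input_open :: "real \<Rightarrow> real \<Rightarrow> int" where
  "net_input_open s t = cnt_open T0 s t - cnt_open SA s t"

lemma loc_finite_Sall: "loc_finite SA"
  unfolding loc_finite_def
proof (intro allI)
  fix a b
  have "SA \<inter> {a..b} = (\<Union>i\<in>{1..c}. S i \<inter> {a..b})" unfolding Sall_def by auto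
  moreover have "finite (\<Union>i\<in>{1..c}. S i \<inter> {a..b})"
    using services finite_Int_atLeastAtMost by blast
  ultimately show "finite (SA \<inter> {a..b})" by simp
qed

lemma loc_finite_arrivals_services: "loc_finite (T0 \<union> SA)"
  using loc_finite_arrivals loc_finite_Sall unfolding loc_finite_def by (auto simp: Int_Un_distrib2)

lemma arrival_not_service: "x \<in> T0 \<Longrightarrow> x \<notin> SA"
  using arrivals_services_disjoint unfolding Sall_def by auto

lemma card_Int_Sall:
  assumes "\<And>Y. loc_finite Y \<Longrightarrow> finite (Y \<inter> I)"
  shows "(\<Sum>i\<in>{1..c}. card (S i \<inter> I)) = card (SA \<inter> I)"
proof -
  have "SA \<inter> I = (\<Union>i\<in>{1..c}. S i \<inter> I)" unfolding Sall_def by auto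
  moreover have "card (\<Union>i\<in>{1..c}. S i \<inter> I) = (\<Sum>i\<in>{1..c}. card (S i \<inter> I))"
    using services services_disjoint assms by (intro card_UN_disjoint) auto
  ultimately show ?thesis by simp
qed

lemma sum_cnt_services: "(\<Sum>i\<in>{1..c}. cnt (S i) s t) = cnt SA s t"
  using card_Int_Sall[of "{s<..t}"] finite_Int_greaterThanAtMost
  unfolding cnt_def by (simp flip: of_nat_sum)

lemma sum_cnt_open_services: "(\<Sum>i\<in>{1..c}. cnt_open (S i) s t) = cnt_open SA s t"
  using card_Int_Sall[of "{s<..<t}"] finite_Int_greaterThanLessThan
  unfolding cnt_open_def by (simp flip: of_nat_sum)

lemma Qv_set_eq: "Qv_set c T0 S t = {net_input s t | s. s \<le> t}"
  unfolding Qv_set_def net_input_def sum_cnt_services ..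

lemma net_input_le_Qv: "s \<le> t \<Longrightarrow> net_input s t \<le> Q t"
  unfolding Qv_def using bdd_Qv_set Qv_set_eq by (intro cSup_upper) auto

lemma Qv_le: "(\<And>s. s \<le> t \<Longrightarrow> net_input s t \<le> M) \<Longrightarrow> Q t \<le> M"
  unfolding Qv_def Qv_set_eq by (rule cSup_least) auto

lemma Qv_nonneg: "0 \<le> Q t"
  using net_input_le_Qv[of t t] by (simp add: net_input_def)

lemma net_input_open_le: "s \<le> t \<Longrightarrow> net_input_open s t \<le> Q t + 1"
proof (cases "s < t")
  case True
  then have "net_input s t = net_input_open s t + (if t \<in> T0 then 1 else 0) - (if t \<in> SA then 1 else 0)"
    unfolding net_input_def net_input_open_def
    using cnt_eq_cnt_open[OF loc_finite_arrivals True] cnt_eq_cnt_open[OF loc_finite_Sall True] by simp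
  moreover assume "s \<le> t"
  ultimately show ?thesis using net_input_le_Qv[of s t] by (auto split: if_splits)
next
  case False
  moreover assume "s \<le> t"
  ultimately show ?thesis using Qv_nonneg[of t] by (simp add: net_input_open_def)
qed

lemma Qv_left_eq: "Ql t = Sup {net_input_open s t | s. s \<le> t}"
  unfolding Qv_left_def net_input_open_def sum_cnt_open_services ..

lemma net_input_open_le_Qv_left: "s \<le> t \<Longrightarrow> net_input_open s t \<le> Ql t"
  unfolding Qv_left_eq using net_input_open_le
  by (intro cSup_upper) (auto simp: bdd_above_def)

lemma Qv_left_le: "(\<And>s. s \<le> t \<Longrightarrow> net_input_open s t \<le> M) \<Longrightarrow> Ql t \<le> M"
  unfolding Qv_left_eq by (rule cSup_least) auto

lemma Qv_left_nonneg: "0 \<le> Ql t"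
  using net_input_open_le_Qv_left[of t t] by (simp add: net_input_open_def)

lemma Qv_arrival: assumes "a \<in> T0" shows "Q a = Ql a + 1"
proof (rule antisym)
  have jump: "net_input s a = net_input_open s a + 1" if "s < a" for s
    unfolding net_input_def net_input_open_def
    using cnt_eq_cnt_open[OF loc_finite_arrivals that] cnt_eq_cnt_open[OF loc_finite_Sall that]
      assms arrival_not_service[OF assms] by simp
  show "Q a \<le> Ql a + 1"
  proof (rule Qv_le)
    fix s assume "s \<le> a"
    then show "net_input s a \<le> Ql a + 1"
      using jump net_input_open_le_Qv_left[of s a] Qv_left_nonneg[of a]
      by (cases "s < a") (auto simp: net_input_def)
  qed
  obtain s0 where s0: "s0 < a" "(T0 \<union> SA) \<inter> {s0<..<a} = {}"
    using loc_finite_gap_before[OF loc_finite_arrivals_services] by blast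
  then have "T0 \<inter> {s0<..<a} = {}" "SA \<inter> {s0<..<a} = {}" by auto
  then have "net_input_open s0 a = 0" unfolding net_input_open_def cnt_open_def by simp
  then have Q1: "1 \<le> Q a" using jump[OF s0(1)] net_input_le_Qv[of s0 a] s0 by simp
  have "Ql a \<le> Q a - 1"
  proof (rule Qv_left_le)
    fix s assume "s \<le> a"
    then show "net_input_open s a \<le> Q a - 1"
      using jump net_input_le_Qv[of s a] Q1 by (cases "s < a") (auto simp: net_input_open_def)
  qed
  then show "Ql a + 1 \<le> Q a" by simp
qed

lemma Qv_add_net_input_le: "a \<le> x \<Longrightarrow> Q a + net_input a x \<le> Q x"
proof -
  assume ax: "a \<le> x"
  have "Q a \<le> Q x - net_input a x"
  proof (rule Qv_le)
    fix s assume "s \<le> a"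
    then have "net_input s x = net_input s a + net_input a x" unfolding net_input_def
      using cnt_split[OF loc_finite_arrivals, of s a x] cnt_split[OF loc_finite_Sall, of s a x] ax by simp
    then show "net_input s a \<le> Q x - net_input a x" using net_input_le_Qv[of s x] \<open>s \<le> a\<close> ax by simp
  qed
  then show ?thesis by simp
qed

lemma Qv_add_net_input_open_le: "a < y \<Longrightarrow> Q a + net_input_open a y \<le> Ql y"
proof -
  assume ay: "a < y"
  have "Q a \<le> Ql y - net_input_open a y"
  proof (rule Qv_le)
    fix s assume "s \<le> a"
    then have "net_input_open s y = net_input s a + net_input_open a y"
      unfolding net_input_def net_input_open_def using ay
        cnt_open_split[OF loc_finite_arrivals, of s a y] cnt_open_split[OF loc_finite_Sall, of s a y]
      by simp
    then show "net_input s a \<le> Ql y - net_input_open a y"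
      using net_input_open_le_Qv_left[of s y] \<open>s \<le> a\<close> ay by simp
  qed
  then show ?thesis by simp
qed

lemma Qv_le_split:
  assumes "a \<le> x" "Q a + net_input a x \<le> M" "cnt T0 a x \<le> M"
  shows "Q x \<le> M"
proof (rule Qv_le)
  fix s assume "s \<le> x"
  show "net_input s x \<le> M"
  proof (cases "s \<le> a")
    case True
    then have "net_input s x = net_input s a + net_input a x" unfolding net_input_def
      using cnt_split[OF loc_finite_arrivals, of s a x] cnt_split[OF loc_finite_Sall, of s a x] assms(1)
      by simp
    then show ?thesis using net_input_le_Qv[of s a] True assms(2) by simp
  next
    case False
    then have "net_input s x \<le> cnt T0 a x" unfolding net_input_def
      using cnt_antimono_left[OF loc_finite_arrivals, of a s x] cnt_nonneg[of SA s x] by simp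
    then show ?thesis using assms(3) by simp
  qed
qed

section \<open>Departure epochs from the vacation queue\<close>

definition busy_epochs :: "real \<Rightarrow> real \<Rightarrow> real set" where
  "busy_epochs a x = {y. a < y \<and> y \<le> x \<and> busy y}"

definition n_busy :: "real \<Rightarrow> real \<Rightarrow> nat" where
  "n_busy a x = card (busy_epochs a x)"

definition queue_position :: "real \<Rightarrow> nat" where
  "queue_position a = nat (Ql a) + 1"

lemma busy_in_Sall: "busy y \<Longrightarrow> y \<in> SA"
  unfolding busy_epoch_def by simp

lemma finite_busy_epochs: "finite (busy_epochs a x)"
  by (rule finite_subset[OF _ finite_Int_greaterThanAtMost[OF loc_finite_Sall, of a x]])
    (auto simp: busy_epochs_def dest: busy_in_Sall)

lemma n_busy_mono: "x \<le> x' \<Longrightarrow> n_busy a x \<le> n_busy a x'"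
  unfolding n_busy_def using finite_busy_epochs by (intro card_mono) (auto simp: busy_epochs_def)

lemma n_busy_strict_mono:
  assumes "x < x'" "busy x'" "a < x'"
  shows "n_busy a x < n_busy a x'"
  unfolding n_busy_def
proof (rule psubset_card_mono[OF finite_busy_epochs])
  have "x' \<in> busy_epochs a x' - busy_epochs a x" "busy_epochs a x \<subseteq> busy_epochs a x'"
    using assms by (auto simp: busy_epochs_def)
  then show "busy_epochs a x \<subset> busy_epochs a x'" by blast
qed

lemma n_busy_split: "a \<le> b \<Longrightarrow> b \<le> x \<Longrightarrow> n_busy a x = n_busy a b + n_busy b x"
proof -
  assume "a \<le> b" "b \<le> x"
  then have "busy_epochs a x = busy_epochs a b \<union> busy_epochs b x"
    "busy_epochs a b \<inter> busy_epochs b x = {}"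
    unfolding busy_epochs_def by auto
  then show ?thesis unfolding n_busy_def using finite_busy_epochs by (simp add: card_Un_disjoint)
qed

lemma busy_epochs_Max:
  assumes "B \<subseteq> busy_epochs a x" "finite B" "B \<noteq> {}"
    and "\<forall>y\<in>busy_epochs a x. y \<le> Max B \<longrightarrow> y \<in> B"
  shows "busy_epochs a (Max B) = B"
proof
  have "Max B \<le> x" using assms(1) Max_in[OF assms(2,3)] by (auto simp: busy_epochs_def)
  then show "busy_epochs a (Max B) \<subseteq> B" using assms(4) by (auto simp: busy_epochs_def)
  show "B \<subseteq> busy_epochs a (Max B)" using assms(1,2) by (auto simp: busy_epochs_def)
qed

lemma int_queue_position: "int (queue_position a) = Ql a + 1"
  unfolding queue_position_def using Qv_left_nonneg[of a] by simp

text \<open>As long as fewer than Q_v(a-) + 1 busy epochs have occurred since the arrival at a, its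
  customer is still waiting, so every service epoch in between is busy.\<close>

lemma busy_while_waiting:
  assumes a: "a \<in> T0" and "a \<le> x" and B: "int (n_busy a x) \<le> Ql a"
  shows "\<forall>y\<in>SA. a < y \<and> y \<le> x \<longrightarrow> busy y"
proof (rule ccontr)
  assume not_all: "\<not> ?thesis"
  define N where "N = {y\<in>SA. a < y \<and> y \<le> x \<and> \<not> busy y}"
  have finN: "finite N"
    by (rule finite_subset[OF _ finite_Int_greaterThanAtMost[OF loc_finite_Sall, of a x]])
      (auto simp: N_def)
  have "N \<noteq> {}" using not_all unfolding N_def by auto
  define m where "m = Min N"
  have mN: "m \<in> N" unfolding m_def using finN \<open>N \<noteq> {}\<close> by simp
  have "SA \<inter> {a<..<m} \<subseteq> busy_epochs a x"
  proof
    fix y assume y: "y \<in> SA \<inter> {a<..<m}"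
    have "busy y"
    proof (rule ccontr)
      assume "\<not> busy y"
      with y mN have "y \<in> N" unfolding N_def by auto
      then have "m \<le> y" unfolding m_def using finN by simp
      with y show False by auto
    qed
    with y mN show "y \<in> busy_epochs a x" unfolding busy_epochs_def N_def by auto
  qed
  then have "cnt_open SA a m \<le> int (n_busy a x)"
    unfolding cnt_open_def n_busy_def using card_mono[OF finite_busy_epochs] by simp
  moreover have "Q a + net_input_open a m \<le> Ql m"
    using Qv_add_net_input_open_le[of a m] mN unfolding N_def by simp
  ultimately have "1 \<le> Ql m"
    using B Qv_arrival[OF a] cnt_open_nonneg[of T0 a m] unfolding net_input_open_def by linarith
  then have "busy m" using mN unfolding N_def busy_epoch_def by simp
  then show False using mN unfolding N_def by simp
qed

lemma cnt_Sall_eq_n_busy: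
  assumes "a \<in> T0" "a \<le> x" "int (n_busy a x) \<le> Ql a"
  shows "cnt SA a x = int (n_busy a x)"
proof -
  have "SA \<inter> {a<..x} = busy_epochs a x"
    using busy_while_waiting[OF assms] unfolding busy_epochs_def by (auto dest: busy_in_Sall)
  then show ?thesis unfolding cnt_def n_busy_def by simp
qed

lemma many_services_after: "\<exists>x\<ge>a. k \<le> card (SA \<inter> {a<..x})"
proof -
  have one: "1 \<in> {1..c}" using servers_nonempty by simp
  obtain x where x: "a \<le> x" "k \<le> card (S 1 \<inter> {a<..x})"
    using loc_finite_many_after services one by blast
  have "S 1 \<subseteq> SA" using one unfolding Sall_def by blast
  then have "card (S 1 \<inter> {a<..x}) \<le> card (SA \<inter> {a<..x})"
    by (intro card_mono finite_Int_greaterThanAtMost[OF loc_finite_Sall]) auto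
  with x show ?thesis by auto
qed

lemma exists_enough_busy_epochs:
  assumes a: "a \<in> T0"
  shows "\<exists>x. queue_position a \<le> n_busy a x"
proof -
  obtain x where x: "a \<le> x" "queue_position a \<le> card (SA \<inter> {a<..x})"
    using many_services_after by blast
  have "queue_position a \<le> n_busy a x"
  proof (rule ccontr)
    assume "\<not> queue_position a \<le> n_busy a x"
    then have "cnt SA a x = int (n_busy a x)"
      using cnt_Sall_eq_n_busy[OF a x(1)] int_queue_position[of a] by linarith
    with x(2) \<open>\<not> queue_position a \<le> n_busy a x\<close> show False unfolding cnt_def by simp
  qed
  then show ?thesis ..
qed

lemma n_busy_attains:
  assumes "1 \<le> k" "k \<le> n_busy a x0"
  shows "\<exists>x. a < x \<and> busy x \<and> n_busy a x = k"
proof -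
  define F where "F = {x\<in>busy_epochs a x0. k \<le> n_busy a x}"
  have "busy_epochs a x0 \<noteq> {}" using assms unfolding n_busy_def by auto
  then have "Max (busy_epochs a x0) \<in> F"
    using assms(2) busy_epochs_Max[of "busy_epochs a x0" a x0] finite_busy_epochs
    unfolding F_def n_busy_def by auto
  then have "F \<noteq> {}" "finite F" using finite_busy_epochs unfolding F_def by auto
  define m where "m = Min F"
  have mF: "m \<in> F" and m_min: "\<forall>x\<in>F. m \<le> x"
    unfolding m_def using \<open>finite F\<close> \<open>F \<noteq> {}\<close> by auto
  then have m: "a < m" "busy m" "m \<le> x0" unfolding F_def busy_epochs_def by auto
  define B where "B = busy_epochs a m - {m}"
  have "card B < k"
  proof (rule ccontr)
    assume "\<not> card B < k"
    then have "B \<noteq> {}" using assms(1) by auto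
    have "finite B" unfolding B_def using finite_busy_epochs by simp
    have "Max B \<in> B" using Max_in[OF \<open>finite B\<close> \<open>B \<noteq> {}\<close>] .
    then have "Max B < m" unfolding B_def busy_epochs_def by auto
    have "\<forall>y\<in>busy_epochs a m. y \<le> Max B \<longrightarrow> y \<in> B"
      using \<open>Max B < m\<close> unfolding B_def by force
    then have "busy_epochs a (Max B) = B"
      using \<open>finite B\<close> \<open>B \<noteq> {}\<close> by (intro busy_epochs_Max[of B a m]) (auto simp: B_def)
    with \<open>Max B \<in> B\<close> \<open>\<not> card B < k\<close> m(3) have "Max B \<in> F"
      unfolding F_def B_def n_busy_def busy_epochs_def by auto
    with m_min \<open>Max B < m\<close> show False by fastforce
  qed
  moreover have "m \<in> busy_epochs a m" using m by (simp add: busy_epochs_def)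
  then have "n_busy a m = card B + 1"
    using card_Suc_Diff1[OF finite_busy_epochs] unfolding n_busy_def B_def by simp
  ultimately have "n_busy a m = k" using mF unfolding F_def by simp
  with m show ?thesis by blast
qed

lemma dep_epoch:
  assumes "a \<in> T0"
  shows "a < dep a" "busy (dep a)" "n_busy a (dep a) = queue_position a"
proof -
  obtain x0 where "queue_position a \<le> n_busy a x0"
    using exists_enough_busy_epochs[OF assms] ..
  then obtain x where x: "a < x" "busy x" "n_busy a x = queue_position a"
    using n_busy_attains[of "queue_position a"] by (auto simp: queue_position_def)
  have "dep a = x" unfolding dep_epoch_def
  proof (rule the_equality)
    fix y assume y: "a < y \<and> busy y \<and> card {z. a < z \<and> z \<le> y \<and> busy z} = nat (Ql a) + 1"
    show "y = x"
    proof (rule ccontr)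
      assume "y \<noteq> x"
      then have "n_busy a y \<noteq> n_busy a x"
        using n_busy_strict_mono[of x y a] n_busy_strict_mono[of y x a] x y
        by (cases "x < y") auto
      with x y show False unfolding n_busy_def busy_epochs_def queue_position_def by simp
    qed
  qed (use x in \<open>simp add: n_busy_def busy_epochs_def queue_position_def\<close>)
  with x show "a < dep a" "busy (dep a)" "n_busy a (dep a) = queue_position a" by simp_all
qed

lemma dep_epoch_strict_mono:
  assumes a: "a \<in> T0" and a': "a' \<in> T0" and "a < a'"
  shows "dep a < dep a'"
proof (rule ccontr)
  assume "\<not> dep a < dep a'"
  then have "n_busy a (dep a') \<le> queue_position a"
    using n_busy_mono dep_epoch(3)[OF a] by (metis not_le)
  moreover have eq: "n_busy a (dep a') = n_busy a a' + queue_position a'"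
    using n_busy_split[of a a' "dep a'"] \<open>a < a'\<close> dep_epoch[OF a'] by simp
  moreover have "1 \<le> queue_position a'" by (simp add: queue_position_def)
  ultimately have B: "int (n_busy a a') \<le> Ql a" using int_queue_position[of a] by linarith
  have "cnt_open SA a a' = cnt SA a a'"
    using cnt_eq_cnt_open[OF loc_finite_Sall \<open>a < a'\<close>] arrival_not_service[OF a'] by simp
  also have "\<dots> = int (n_busy a a')" using cnt_Sall_eq_n_busy[OF a _ B] \<open>a < a'\<close> by simp
  finally have "Ql a + 1 - int (n_busy a a') \<le> Ql a'"
    using Qv_add_net_input_open_le[OF \<open>a < a'\<close>] Qv_arrival[OF a] cnt_open_nonneg[of T0 a a']
    unfolding net_input_open_def by linarith
  then have "queue_position a < n_busy a (dep a')"
    using eq int_queue_position[of a] int_queue_position[of a'] by linarith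
  with \<open>n_busy a (dep a') \<le> queue_position a\<close> show False by simp
qed

lemma dep_epoch_after_last_points:
  assumes "a \<in> last_points T0 u (nat (Q u))"
  shows "u < dep a"
proof (rule ccontr)
  assume "\<not> u < dep a"
  have a: "a \<in> T0" "a \<le> u" "card (T0 \<inter> {a..u}) \<le> nat (Q u)"
    using assms unfolding last_points_def by auto
  define d where "d = dep a"
  have "a < d" "d \<le> u" using dep_epoch(1)[OF a(1)] \<open>\<not> u < dep a\<close> d_def by auto
  have "busy_epochs a d \<subseteq> SA \<inter> {a<..d}" unfolding busy_epochs_def by (auto dest: busy_in_Sall)
  then have "int (n_busy a d) \<le> cnt SA a d"
    unfolding n_busy_def cnt_def using finite_Int_greaterThanAtMost[OF loc_finite_Sall]
    by (simp add: card_mono)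
  moreover have "int (n_busy a d) = Q a"
    using dep_epoch(3)[OF a(1)] int_queue_position Qv_arrival[OF a(1)] d_def by simp
  ultimately have "Q d \<le> cnt T0 a d"
    using Qv_le_split[of a d "cnt T0 a d"] \<open>a < d\<close> unfolding net_input_def by simp
  moreover have "Q u \<le> Q d + cnt T0 d u"
    using Qv_le_split[of d u] \<open>d \<le> u\<close> Qv_nonneg[of d] cnt_nonneg[of SA d u]
    by (simp add: net_input_def)
  ultimately have "Q u \<le> cnt T0 a u"
    using cnt_split[OF loc_finite_arrivals, of a d u] \<open>a < d\<close> \<open>d \<le> u\<close> by simp
  moreover have "T0 \<inter> {a..u} = insert a (T0 \<inter> {a<..u})" using a by auto
  then have "card (T0 \<inter> {a..u}) = cnt T0 a u + 1"
    unfolding cnt_def using finite_Int_greaterThanAtMost[OF loc_finite_arrivals] by simp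
  ultimately show False using a(3) Qv_nonneg[of u] by linarith
qed

text \<open>The customers of L still waiting at t arrived no earlier than the first of them, a0, whose
  presence keeps every service epoch of (a0, t] busy; so they number at most Q_v(t).\<close>

lemma card_waiting_le_Qv:
  assumes "L \<subseteq> T0" "finite L" "\<forall>a\<in>L. a \<le> t"
  shows "int (card {a\<in>L. t < dep a}) \<le> Q t"
proof (cases "{a\<in>L. t < dep a} = {}")
  case True
  then show ?thesis using Qv_nonneg[of t] by (simp only: card.empty of_nat_0)
next
  case False
  define a0 where "a0 = Min {a\<in>L. t < dep a}"
  have fin: "finite {a\<in>L. t < dep a}" using assms(2) by simp
  have a0: "a0 \<in> T0" "a0 \<le> t" "t < dep a0"
    using Min_in[OF fin False] assms unfolding a0_def by auto
  have "n_busy a0 t < queue_position a0"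
    using n_busy_strict_mono[OF a0(3) dep_epoch(2,1)[OF a0(1)]] dep_epoch(3)[OF a0(1)] by simp
  then have B: "int (n_busy a0 t) \<le> Ql a0" using int_queue_position[of a0] by linarith
  have "Q a0 + net_input a0 t \<le> Q t" using Qv_add_net_input_le[OF a0(2)] .
  then have Qt: "1 + cnt T0 a0 t \<le> Q t"
    using Qv_arrival[OF a0(1)] cnt_Sall_eq_n_busy[OF a0(1,2) B] B unfolding net_input_def by linarith
  have "{a\<in>L. t < dep a} \<subseteq> insert a0 (T0 \<inter> {a0<..t})"
  proof
    fix a assume a: "a \<in> {a\<in>L. t < dep a}"
    then have "a0 \<le> a" unfolding a0_def using fin by simp
    then show "a \<in> insert a0 (T0 \<inter> {a0<..t})" using a assms by auto
  qed
  then have "card {a\<in>L. t < dep a} \<le> card (insert a0 (T0 \<inter> {a0<..t}))"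
    using finite_Int_greaterThanAtMost[OF loc_finite_arrivals] by (intro card_mono) auto
  also have "\<dots> \<le> card (T0 \<inter> {a0<..t}) + 1"
    using finite_Int_greaterThanAtMost[OF loc_finite_arrivals] by (simp add: card_insert_if)
  finally show ?thesis using Qt unfolding cnt_def by linarith
qed

definition server :: "real \<Rightarrow> nat" where
  "server a = (THE i. i \<in> {1..c} \<and> dep a \<in> S i)"

lemma server:
  assumes "a \<in> T0"
  shows "server a \<in> {1..c}" "dep a \<in> S (server a)"
    and "svc_time c T0 S a = nextpt (S (server a)) (dep a) - dep a"
proof -
  have "dep a \<in> SA" using dep_epoch(2)[OF assms] busy_in_Sall by simp
  then obtain i where i: "i \<in> {1..c}" "dep a \<in> S i" unfolding Sall_def by auto
  have "server a = i"
    unfolding server_def by (rule the_equality) (use i services_disjoint in blast)+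
  with i show "server a \<in> {1..c}" "dep a \<in> S (server a)"
    and "svc_time c T0 S a = nextpt (S (server a)) (dep a) - dep a"
    unfolding svc_time_def server_def Let_def by simp_all
qed

lemma svc_time_nonneg: "a \<in> T0 \<Longrightarrow> 0 \<le> svc_time c T0 S a"
  using server[of a] services less_nextpt[of "S (server a)" "dep a"] by force

section \<open>Comparison of the two queues\<close>

definition customers :: "real \<Rightarrow> nat \<Rightarrow> real \<Rightarrow> real list" where
  "customers u q t = sorted_list_of_set (last_points T0 u q) @ sorted_list_of_set (T0 \<inter> {u<..t})"

lemma finite_arrivals_between: "finite (T0 \<inter> {u<..t})"
  using finite_Int_greaterThanAtMost[OF loc_finite_arrivals] .

lemma finite_last_arrivals: "finite (last_points T0 u q)"
  using finite_last_points[OF loc_finite_arrivals unbounded_arrivals] .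

lemma set_customers: "set (customers u q t) = last_points T0 u q \<union> T0 \<inter> {u<..t}"
  unfolding customers_def using finite_arrivals_between finite_last_arrivals by simp

lemma sorted_customers: "sorted_wrt (<) (customers u q t)"
  unfolding customers_def using finite_arrivals_between finite_last_arrivals
  by (auto simp: sorted_wrt_append last_points_def)

lemma customers_split: "customers u q t = sorted_list_of_set (last_points T0 u q) @ customers u 0 t"
  unfolding customers_def using last_points_0[OF loc_finite_arrivals] by simp

text \<open>Customers waiting at time u enter the FCFS queue at time u, later ones at their arrival.\<close>

lemma Qu_eq_fcfs:
  "Qu c T0 S u (t - u) (q, r, e) =
     count_above t (fcfs_starts (map (\<lambda>x. u + x) r)
       (map (\<lambda>a. (max u a, svc_time c T0 S a)) (customers u q t)))"
proof -
  have "map (\<lambda>a. (u, svc_time c T0 S a)) (sorted_list_of_set (last_points T0 u q))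
        @ map (\<lambda>a. (a, svc_time c T0 S a)) (sorted_list_of_set (T0 \<inter> {u<..t}))
      = map (\<lambda>a. (max u a, svc_time c T0 S a)) (customers u q t)"
    using finite_last_arrivals finite_arrivals_between
    by (auto simp: customers_def last_points_def)
  then show ?thesis
    unfolding Qu_def count_above_def last_points_def[symmetric] by (simp add: Let_def)
qed

lemma sorted_dep_customers: "sorted_wrt (<) (u # map dep (customers u (nat (Q u)) t))"
proof -
  have T0: "set (customers u (nat (Q u)) t) \<subseteq> T0"
    unfolding set_customers by (auto simp: last_points_def)
  have "sorted_wrt (<) (map dep (customers u (nat (Q u)) t))"
    using sorted_customers by (rule sorted_wrt_map_mono) (use T0 dep_epoch_strict_mono in blast)
  moreover have "\<forall>a\<in>set (customers u (nat (Q u)) t). u < dep a"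
    unfolding set_customers using dep_epoch_after_last_points dep_epoch(1) by force
  ultimately show ?thesis by simp
qed

lemma Qu_empty_le:
  assumes "sorted r" "length r = c" "\<forall>x\<in>set r. 0 \<le> x"
  shows "Qu c T0 S u (t - u) (0, replicate c 0, e) \<le> Qu c T0 S u (t - u) (q, r, e')"
proof -
  let ?cs = "map (\<lambda>a. (max u a, svc_time c T0 S a))"
  let ?W = "map (\<lambda>x. u + x) r"
  define W' where "W' = fcfs_free_times ?W (?cs (sorted_list_of_set (last_points T0 u q)))"
  have cs: "\<forall>p\<in>set (?cs as). u \<le> fst p \<and> 0 \<le> snd p" if "set as \<subseteq> T0" for as
    using that svc_time_nonneg by auto
  have "set (sorted_list_of_set (last_points T0 u q)) \<subseteq> T0" "set (customers u 0 t) \<subseteq> T0"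
    using finite_last_arrivals by (auto simp: set_customers last_points_def)
  note cs = cs[OF this(1)] cs[OF this(2)]
  have W: "?W \<noteq> []" "sorted ?W" "\<forall>w\<in>set ?W. u \<le> w"
    using assms servers_nonempty by (auto simp: sorted_map)
  have "sorted W'" unfolding W'_def using W(2) by (rule sorted_fcfs_free_times)
  moreover have "length W' = c" unfolding W'_def using W(1) assms(2) length_fcfs_free_times by simp
  moreover have "\<forall>w\<in>set W'. u \<le> w" unfolding W'_def using W(3) cs(1) by (rule fcfs_free_times_ge)
  ultimately
  have "list_all2 (\<le>) (fcfs_starts (replicate c u) (?cs (customers u 0 t)))
      (fcfs_starts W' (?cs (customers u 0 t)))"
    using servers_nonempty cs(2) by (intro fcfs_starts_idle_le) auto
  then have "count_above t (fcfs_starts (replicate c u) (?cs (customers u 0 t)))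
      \<le> count_above t (fcfs_starts W' (?cs (customers u 0 t)))"
    by (rule count_above_mono)
  then show ?thesis
    unfolding Qu_eq_fcfs customers_split[of u q] W'_def
    by (simp add: fcfs_starts_append count_above_append map_replicate_const)
qed

lemma Qu_le_Qv:
  assumes "u \<le> t"
  shows "int (Qu c T0 S u (t - u) (nat (Q u), sort (map (\<lambda>i. resid (S i) u) [1..<c+1]), e)) \<le> Q t"
proof -
  let ?as = "customers u (nat (Q u)) t"
  let ?W = "map (\<lambda>x. u + x) (sort (map (\<lambda>i. resid (S i) u) [1..<c+1]))"
  have T0: "set ?as \<subseteq> T0" unfolding set_customers by (auto simp: last_points_def)
  have "dominated ?W (map (\<lambda>i. nextpt (S i) u) [1..<c+1])"
    unfolding dominated_def count_above_map_sort by (simp add: resid_def o_def)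
  moreover have "map (\<lambda>a. (max u a, svc_time c T0 S a)) ?as
      = map (\<lambda>a. (max u a, nextpt (S (server a)) (dep a) - dep a)) ?as"
    using T0 server(3) by auto
  ultimately have "list_all2 (\<le>)
      (fcfs_starts ?W (map (\<lambda>a. (max u a, svc_time c T0 S a)) ?as)) (map dep ?as)"
    using T0 sorted_dep_customers dep_epoch(1) server(1,2) \<open>u \<le> t\<close>
    by (simp only:) (intro fcfs_starts_le_service_epochs[OF services], auto simp: sorted_map less_imp_le)
  then have "Qu c T0 S u (t - u) (nat (Q u), sort (map (\<lambda>i. resid (S i) u) [1..<c+1]), e)
      \<le> count_above t (map dep ?as)"
    unfolding Qu_eq_fcfs by (rule count_above_mono)
  also have "count_above t (map dep ?as) = card {a\<in>set ?as. t < dep a}"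
    using sorted_customers[of u "nat (Q u)" t] unfolding count_above_def
    by (simp add: filter_map o_def distinct_length_filter strict_sorted_iff Int_def conj_commute)
  finally have "Qu c T0 S u (t - u) (nat (Q u), sort (map (\<lambda>i. resid (S i) u) [1..<c+1]), e)
      \<le> card {a\<in>set ?as. t < dep a}" .
  moreover have "int (card {a\<in>set ?as. t < dep a}) \<le> Q t"
    using T0 \<open>u \<le> t\<close> finite_last_arrivals finite_arrivals_between
    by (intro card_waiting_le_Qv) (auto simp: set_customers last_points_def)
  ultimately show ?thesis by linarith
qed

end

theorem lemma3:
  fixes c :: nat and T0 :: "real set" and S :: "nat \<Rightarrow> real set" and u :: real
  assumes "c \<ge> 1"
    and "loc_finite T0" and "unbounded_both T0"
    and "\<forall>i\<in>{1..c}. loc_finite (S i) \<and> unbounded_both (S i)"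
    and "\<forall>i\<in>{1..c}. T0 \<inter> S i = {}"
    and "\<forall>i\<in>{1..c}. \<forall>j\<in>{1..c}. i \<noteq> j \<longrightarrow> S i \<inter> S j = {}"
    and "\<forall>t. bdd_above (Qv_set c T0 S t)"
  defines "q \<equiv> nat (Qv c T0 S u)"
    and "r \<equiv> sort (map (\<lambda>i. resid (S i) u) [1..<c+1])"
    and "e \<equiv> u - Sup {a \<in> T0. a \<le> u}"
  shows "\<forall>t\<ge>u.
           Qu c T0 S u (t - u) (0, replicate c 0, e) \<le> Qu c T0 S u (t - u) (q, r, e)
         \<and> int (Qu c T0 S u (t - u) (q, r, e)) \<le> Qv c T0 S t"
proof (intro allI impI conjI)
  interpret vacation_system c T0 S
    using assms(1-7) by unfold_locales
  fix t assume "u \<le> t"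
  have "sorted r" "length r = c" "\<forall>x\<in>set r. 0 \<le> x"
    unfolding r_def using services resid_pos by (auto simp: less_imp_le)
  then show "Qu c T0 S u (t - u) (0, replicate c 0, e) \<le> Qu c T0 S u (t - u) (q, r, e)"
    by (rule Qu_empty_le)
  show "int (Qu c T0 S u (t - u) (q, r, e)) \<le> Qv c T0 S t"
    unfolding q_def r_def using Qu_le_Qv[OF \<open>u \<le> t\<close>] .
qed

end
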